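(* In the setting of the context, there is a constant $c$ depending only on $d$, $c_1$, $c_2$ such that for all $H>0$ and $h\in(0,1]$ with $\rho=h/H<1/2$, all $k\in\mathbb{N}_0\times\mathbb{Z}^d$, $i\in\{0,\dots,d\}$ and $s\in\{+,-\}$: (a) $\displaystyle\sum_{F\in\partial\tilde I^{is}_k}S(F\setminus Z^{is}_k)\le c\,\rho H^d$; (b) $\displaystyle\sum_{F\in\partial\tilde I_k\setminus\bigcup_{j=0}^d(\partial\tilde I^{j-}_k\cup\partial\tilde I^{j+}_k)}S(F)\le c\,\rho H^d$.
   Context: Let $d\ge1$, $\mathbb{R}^{d+1}_+=(0,\infty)\times\mathbb{R}^d$ with points $y=(y_0,\dots,y_d)$; $V,S$ denote $(d+1)$- and $d$-dimensional Hausdorff measure. Grid: fix constants $c_1,c_2>0$; $\mathcal C^h$ is a collection of closed subsets (cells) of $\overline{\mathbb{R}^{d+1}_+}$ with Lipschitz boundaries and pairwise disjoint interiors, whose union is $\overline{\mathbb{R}^{d+1}_+}$, with $\operatorname{diam}C\le h$, $V(C)\ge c_1h^{d+1}$, $S(\partial C)\le c_2h^d$ for all cells. Interior faces: ordered pairs $C\to N$ of distinct cells with $S(C\cap N)>0$, identified with the set $C\cap N$. Initial faces: for each cell $C$ meeting $\{0\}\times\mathbb{R}^d$, faces $\partial\to C$ and $C\to\partial$ identified with $C\cap(\{0\}\times\mathbb{R}^d)$. Cubes: for $H>0$ and $k\in\mathbb{N}_0\times\mathbb{Z}^d$, $I_k=H\prod_{i=0}^d[k_i,k_i+1]$; $e^{(i)}$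 is the $i$-th standard basis vector. Fix a partition $\{\tilde I_k\}$ of $\mathcal C^h$ such that every $C\in\tilde I_k$ meets $I_k$. Define $\partial\tilde I_k=\{C\to\partial: C\in\tilde I_k\}\cup\{C\to N\text{ interior face}: C\in\tilde I_k,\ N\notin\tilde I_k\}$. Set $\partial\tilde I^{i\pm}_k=\{C\to N \text{ interior face}: C\in\tilde I_k,\ N\in\tilde I_{k\pm e^{(i)}}\}$ if $k\pm e^{(i)}\in\mathbb{N}_0\times\mathbb{Z}^d$, and otherwise ($i=0$, sign $-$, $k_0=0$) $\partial\tilde I^{0-}_k=\{C\to\partial: C\in\tilde I_k\}$. Half-cylinders: $Z^{i+}_k=\{y\in\overline{\mathbb{R}^{d+1}_+}: y_i>H(k_i+\tfrac12),\ y_j\in(H(k_j+\rho),H(k_j+1-\rho))\ \forall j\ne i\}$ and $Z^{i-}_k$ defined likewise with $y_i<H(k_i+\tfrac12)$. *)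

theory Defs
  imports "HOL-Analysis.Analysis"
begin

text \<open>Points of the closed half space in R^(d+1) are vectors indexed by 'n option:
  coordinate None is y_0, coordinates Some j (j :: 'n, CARD('n) = d) are y_1..y_d.\<close>

definition hausdorff_pre :: "nat \<Rightarrow> real \<Rightarrow> 'a::metric_space set \<Rightarrow> ennreal" where
  "hausdorff_pre s \<delta> A =
     (INF C \<in> {C :: nat \<Rightarrow> 'a set. A \<subseteq> (\<Union>i. C i) \<and> (\<forall>i. bounded (C i) \<and> diameter (C i) \<le> \<delta>)}.
        (\<Sum>i. ennreal (unit_ball_vol (real s) * (diameter (C i) / 2) ^ s)))"

definition hausdorff_measure :: "nat \<Rightarrow> 'a::metric_space set \<Rightarrow> ennreal" where
  "hausdorff_measure s A = (SUP \<delta> \<in> {0<..}. hausdorff_pre s \<delta> A)"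

definition half_space :: "(real^('n::finite option)) set" where
  "half_space = {y. 0 \<le> y $ None}"

definition plane0 :: "(real^('n::finite option)) set" where
  "plane0 = {y. y $ None = 0}"

definition lipschitz_boundary :: "(real^('n::finite option)) set \<Rightarrow> bool" where
  "lipschitz_boundary C \<longleftrightarrow>
     (\<forall>p \<in> frontier C. \<exists>r>0. \<exists>Q L (g :: real^'n \<Rightarrow> real).
        orthogonal_transformation Q \<and> L-lipschitz_on UNIV g \<and>
        (\<forall>x \<in> ball p r. x \<in> C \<longleftrightarrow> g (\<chi> j. Q (x - p) $ Some j) \<le> Q (x - p) $ None))"

definition is_grid :: "real \<Rightarrow> real \<Rightarrow> real \<Rightarrow> (real^('n::finite option)) set set \<Rightarrow> bool" where
  "is_grid c1 c2 h \<C> \<longleftrightarrow>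
     (\<forall>C\<in>\<C>. closed C \<and> bounded C \<and> C \<subseteq> half_space \<and> lipschitz_boundary C \<and>
        diameter C \<le> h \<and> measure lebesgue C \<ge> c1 * h ^ (CARD('n) + 1) \<and>
        hausdorff_measure CARD('n) (frontier C) \<le> ennreal (c2 * h ^ CARD('n))) \<and>
     (\<forall>C\<in>\<C>. \<forall>N\<in>\<C>. C \<noteq> N \<longrightarrow> interior C \<inter> interior N = {}) \<and>
     \<Union>\<C> = half_space"

datatype 'c face = IntF 'c 'c | ToBd 'c | FromBd 'c

definition face_set :: "(real^('n::finite option)) set face \<Rightarrow> (real^('n option)) set" where
  "face_set F = (case F of IntF C N \<Rightarrow> C \<inter> N | ToBd C \<Rightarrow> C \<inter> plane0 | FromBd C \<Rightarrow> C \<inter> plane0)"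

definition interior_face :: "(real^('n::finite option)) set set \<Rightarrow> (real^('n option)) set \<Rightarrow> (real^('n option)) set \<Rightarrow> bool" where
  "interior_face \<C> C N \<longleftrightarrow> C \<in> \<C> \<and> N \<in> \<C> \<and> C \<noteq> N \<and> hausdorff_measure CARD('n) (C \<inter> N) > 0"

definition idx_set :: "('n::finite option \<Rightarrow> int) set" where
  "idx_set = {k. 0 \<le> k None}"

definition cube :: "real \<Rightarrow> ('n::finite option \<Rightarrow> int) \<Rightarrow> (real^('n option)) set" where
  "cube H k = {y. \<forall>i. H * of_int (k i) \<le> y $ i \<and> y $ i \<le> H * (of_int (k i) + 1)}"

text \<open>It k is the block \<tilde>I_k; blocks (for k in idx_set) partition the cells, and
  every cell in \<tilde>I_k meets I_k.\<close>
definition valid_partition :: "real \<Rightarrow> (real^('n::finite option)) set set \<Rightarrow> (('n option \<Rightarrow> int) \<Rightarrow> (real^('n option)) set set) \<Rightarrow> bool" where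
  "valid_partition H \<C> It \<longleftrightarrow>
     (\<forall>k\<in>idx_set. It k \<subseteq> \<C> \<and> (\<forall>C\<in>It k. C \<inter> cube H k \<noteq> {})) \<and>
     (\<forall>C\<in>\<C>. \<exists>!k. k \<in> idx_set \<and> C \<in> It k)"

definition bdry_block :: "(real^('n::finite option)) set set \<Rightarrow> (('n option \<Rightarrow> int) \<Rightarrow> (real^('n option)) set set) \<Rightarrow> ('n option \<Rightarrow> int) \<Rightarrow> (real^('n option)) set face set" where
  "bdry_block \<C> It k =
     {ToBd C | C. C \<in> It k \<and> C \<in> \<C> \<and> C \<inter> plane0 \<noteq> {}} \<union>
     {IntF C N | C N. interior_face \<C> C N \<and> C \<in> It k \<and> N \<notin> It k}"

text \<open>Direction i, sign s (True = +, False = -).\<close>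
definition bdry_dir :: "(real^('n::finite option)) set set \<Rightarrow> (('n option \<Rightarrow> int) \<Rightarrow> (real^('n option)) set set) \<Rightarrow> ('n option \<Rightarrow> int) \<Rightarrow> 'n option \<Rightarrow> bool \<Rightarrow> (real^('n option)) set face set" where
  "bdry_dir \<C> It k i s =
     (let k' = k(i := (if s then k i + 1 else k i - 1)) in
      if k' \<in> idx_set then {IntF C N | C N. interior_face \<C> C N \<and> C \<in> It k \<and> N \<in> It k'}
      else {ToBd C | C. C \<in> It k \<and> C \<in> \<C> \<and> C \<inter> plane0 \<noteq> {}})"

definition halfcyl :: "real \<Rightarrow> real \<Rightarrow> ('n::finite option \<Rightarrow> int) \<Rightarrow> 'n option \<Rightarrow> bool \<Rightarrow> (real^('n option)) set" where
  "halfcyl H \<rho> k i s =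
     {y \<in> half_space.
        (if s then y $ i > H * (of_int (k i) + 1/2) else y $ i < H * (of_int (k i) + 1/2)) \<and>
        (\<forall>j. j \<noteq> i \<longrightarrow> H * (of_int (k j) + \<rho>) < y $ j \<and> y $ j < H * (of_int (k j) + 1 - \<rho>))}"

end

theory Submission
  imports Defs
begin

(* A face of the block \<tilde>I_k that leaves the half-cylinder Z^{is}_k, or that does not face one
   of the 2(d+1) neighbouring blocks, lies in a cell containing a point within distance h of two
   faces of the cube I_k in different directions, i.e. a cell near a codimension-two edge of I_k.
   Cells have diameter at most h, volume at least c1 h^(d+1) and overlap only in null sets (a set
   of finite d-dimensional Hausdorff measure in R^(d+1) is Lebesgue-null), so packing them into
   boxes of size h x h x H^(d-1) around the edges shows there are O((H/h)^(d-1)) such cells, each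
   with O(1) neighbours. Every face lies in the boundaries of its two cells and so has measure at
   most 2 c2 h^d; the total is O(h H^(d-1)) = O(\<rho> H^d). *)

lemma INF_ennreal_add_const_image:
  fixes f :: "'a \<Rightarrow> ennreal"
  shows "(INF i\<in>I. f i + c) = (INF i\<in>I. f i) + c"
proof (cases "I = {}")
  case False
  then show ?thesis
    using continuous_at_Inf_mono[of "\<lambda>x. x + c" "f ` I"]
      continuous_add[of "at_right (Inf (f ` I))" "\<lambda>x. x" "\<lambda>x. c"]
    by (auto simp: mono_def image_comp)
qed simp

lemma ennreal_le_INF_add_INF:
  fixes f :: "'a \<Rightarrow> ennreal" and g :: "'b \<Rightarrow> ennreal"
  assumes "\<And>a b. a \<in> A \<Longrightarrow> b \<in> B \<Longrightarrow> x \<le> f a + g b"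
  shows "x \<le> (INF a\<in>A. f a) + (INF b\<in>B. g b)"
proof -
  have "x \<le> f a + (INF b\<in>B. g b)" if "a \<in> A" for a
  proof -
    have "x \<le> (INF b\<in>B. g b + f a)"
      using assms[OF that] by (intro INF_greatest) (simp add: add.commute)
    then show ?thesis
      using INF_ennreal_add_const_image[of g "f a" B] by (simp add: ac_simps)
  qed
  then have "x \<le> (INF a\<in>A. f a + (INF b\<in>B. g b))"
    by (rule INF_greatest)
  then show ?thesis
    by (simp only: INF_ennreal_add_const_image)
qed

lemma suminf_interleave_ennreal:
  fixes a b :: "nat \<Rightarrow> ennreal"
  shows "(\<Sum>n. if even n then a (n div 2) else b (n div 2)) = (\<Sum>n. a n) + (\<Sum>n. b n)"
proof -
  define f where "f n = (if even n then a (n div 2) else b (n div 2))" for n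
  have "sum f {n * 2..<n * 2 + 2} = a n + b n" for n
  proof -
    have "{n * 2..<n * 2 + 2} = {2 * n, 2 * n + 1}" by auto
    then show ?thesis by (simp add: f_def)
  qed
  moreover have "(\<lambda>n. sum f {n * 2..<n * 2 + 2}) sums suminf f"
    by (rule sums_group[OF summable_sums[OF summableI]]) simp
  ultimately have "(\<lambda>n. a n + b n) sums suminf f"
    by simp
  then show ?thesis
    unfolding f_def by (simp add: sums_iff suminf_add)
qed

lemma hausdorff_pre_mono: "A \<subseteq> B \<Longrightarrow> hausdorff_pre s \<delta> A \<le> hausdorff_pre s \<delta> B"
  unfolding hausdorff_pre_def by (rule INF_superset_mono) auto

lemma hausdorff_measure_mono: "A \<subseteq> B \<Longrightarrow> hausdorff_measure s A \<le> hausdorff_measure s B"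
  unfolding hausdorff_measure_def by (rule SUP_mono) (auto intro: hausdorff_pre_mono)

lemma hausdorff_measure_empty:
  assumes "0 < s"
  shows "hausdorff_measure s ({} :: 'a::metric_space set) = 0"
proof -
  have "hausdorff_pre s \<delta> ({} :: 'a set) = 0" if "0 < \<delta>" for \<delta>
  proof -
    have "hausdorff_pre s \<delta> ({} :: 'a set) \<le> (\<Sum>i. ennreal (unit_ball_vol (real s) * (diameter ({} :: 'a set) / 2) ^ s))"
      unfolding hausdorff_pre_def using that by (intro INF_lower) auto
    then show ?thesis
      using assms by (simp add: zero_power)
  qed
  then show ?thesis
    unfolding hausdorff_measure_def by simp
qed

lemma hausdorff_pre_Un_le:
  fixes A B :: "'a::metric_space set"
  shows "hausdorff_pre s \<delta> (A \<union> B) \<le> hausdorff_pre s \<delta> A + hausdorff_pre s \<delta> B"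
proof -
  define W where "W C = (\<Sum>i. ennreal (unit_ball_vol (real s) * (diameter (C i) / 2) ^ s))"
    for C :: "nat \<Rightarrow> 'a set"
  define Cov where "Cov X = {C :: nat \<Rightarrow> 'a set. X \<subseteq> (\<Union>i. C i) \<and> (\<forall>i. bounded (C i) \<and> diameter (C i) \<le> \<delta>)}" for X
  have pre: "hausdorff_pre s \<delta> X = (INF C\<in>Cov X. W C)" for X
    by (simp add: hausdorff_pre_def W_def Cov_def)
  have "(INF C\<in>Cov (A \<union> B). W C) \<le> W CA + W CB" if "CA \<in> Cov A" "CB \<in> Cov B" for CA CB
  proof -
    define D where "D n = (if even n then CA (n div 2) else CB (n div 2))" for n
    have "CA i \<subseteq> (\<Union>n. D n)" "CB i \<subseteq> (\<Union>n. D n)" for i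
      using UN_upper[of "2 * i" UNIV D] UN_upper[of "2 * i + 1" UNIV D] by (simp_all add: D_def)
    then have "(\<Union>i. CA i) \<subseteq> (\<Union>n. D n)" "(\<Union>i. CB i) \<subseteq> (\<Union>n. D n)"
      by (simp_all add: UN_least)
    with that have "A \<union> B \<subseteq> (\<Union>n. D n)"
      unfolding Cov_def by blast
    moreover have "\<forall>n. bounded (D n) \<and> diameter (D n) \<le> \<delta>"
      using that by (simp add: Cov_def D_def)
    ultimately have "D \<in> Cov (A \<union> B)"
      by (simp add: Cov_def)
    then have "(INF C\<in>Cov (A \<union> B). W C) \<le> W D"
      by (rule INF_lower)
    also have "W D = W CA + W CB"
      unfolding W_def suminf_interleave_ennreal[symmetric] by (rule suminf_cong) (simp add: D_def)
    finally show ?thesis .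
  qed
  then show ?thesis
    unfolding pre by (rule ennreal_le_INF_add_INF)
qed
lemma hausdorff_measure_Un_le:
  "hausdorff_measure s (A \<union> B) \<le> hausdorff_measure s A + hausdorff_measure s B"
  unfolding hausdorff_measure_def
  by (intro SUP_least order_trans[OF hausdorff_pre_Un_le] add_mono SUP_upper)

lemma ball_vol_le_cover_term:
  assumes "0 \<le> r" "r \<le> \<delta>"
  shows "unit_ball_vol (real (Suc s)) * r ^ Suc s
    \<le> \<delta> * (unit_ball_vol (real (Suc s)) * 2 ^ s / unit_ball_vol (real s)) * (unit_ball_vol (real s) * (r / 2) ^ s)"
proof -
  have "unit_ball_vol (real (Suc s)) * r ^ Suc s \<le> unit_ball_vol (real (Suc s)) * \<delta> * r ^ s"
    using assms by (simp add: mult.assoc mult_left_mono mult_right_mono)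
  also have "\<dots> = \<delta> * (unit_ball_vol (real (Suc s)) * 2 ^ s / unit_ball_vol (real s)) * (unit_ball_vol (real s) * (r / 2) ^ s)"
    using unit_ball_vol_pos[of "real s"] by (simp add: field_simps del: unit_ball_vol_pos)
  finally show ?thesis .
qed

lemma emeasure_lborel_le_cover_sum:
  fixes A :: "'a::euclidean_space set" and C :: "nat \<Rightarrow> 'a set"
  assumes dim: "DIM('a) = Suc s" and cover: "A \<subseteq> (\<Union>i. C i)"
    and small: "\<And>i. bounded (C i) \<and> diameter (C i) \<le> \<delta>"
  shows "emeasure lborel A \<le> ennreal (\<delta> * (unit_ball_vol (real (Suc s)) * 2 ^ s / unit_ball_vol (real s)))
           * (\<Sum>i. ennreal (unit_ball_vol (real s) * (diameter (C i) / 2) ^ s))"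
proof -
  define K where "K = unit_ball_vol (real (Suc s)) * 2 ^ s / unit_ball_vol (real s)"
  define r where "r i = diameter (C i)" for i
  define p where "p i = (SOME x. x \<in> C i)" for i
  have p: "p i \<in> C i" if "x \<in> C i" for x i
    using that unfolding p_def by (rule someI)
  have r: "0 \<le> r i" "r i \<le> \<delta>" for i
    using small[of i] by (auto simp: r_def diameter_ge_0)
  have "C i \<subseteq> cball (p i) (r i)" for i
    using p[of _ i] small[of i] diameter_bounded_bound[of "C i" "p i"] by (auto simp: r_def)
  then have "(\<Union>i. C i) \<subseteq> (\<Union>i. cball (p i) (r i))"
    by (rule UN_mono[OF subset_refl])
  with cover have "A \<subseteq> (\<Union>i. cball (p i) (r i))"
    by (rule order_trans)
  then have "emeasure lborel A \<le> emeasure lborel (\<Union>i. cball (p i) (r i))"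
    by (rule emeasure_mono) auto
  also have "\<dots> \<le> (\<Sum>i. emeasure lborel (cball (p i) (r i)))"
    by (rule emeasure_subadditive_countably) auto
  also have "\<dots> = (\<Sum>i. ennreal (unit_ball_vol (real (Suc s)) * r i ^ Suc s))"
    using r by (simp add: emeasure_cball dim)
  also have "\<dots> \<le> (\<Sum>i. ennreal (\<delta> * K) * ennreal (unit_ball_vol (real s) * (r i / 2) ^ s))"
  proof (intro suminf_le allI)
    fix i
    have "ennreal (unit_ball_vol (real (Suc s)) * r i ^ Suc s)
        \<le> ennreal (\<delta> * K * (unit_ball_vol (real s) * (r i / 2) ^ s))"
      unfolding K_def by (intro ennreal_leI ball_vol_le_cover_term r)
    also have "\<dots> = ennreal (\<delta> * K) * ennreal (unit_ball_vol (real s) * (r i / 2) ^ s)"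
      using r[of i] by (intro ennreal_mult) (simp_all add: K_def)
    finally show "ennreal (unit_ball_vol (real (Suc s)) * r i ^ Suc s) \<le> \<dots>" .
  qed auto
  finally show ?thesis
    by (simp add: K_def r_def)
qed

lemma hausdorff_measure_finite_imp_null:
  fixes A :: "'a::euclidean_space set"
  assumes dim: "DIM('a) = Suc s" and finite: "hausdorff_measure s A < \<infinity>"
  shows "emeasure lborel A = 0"
proof -
  define K where "K = unit_ball_vol (real (Suc s)) * 2 ^ s / unit_ball_vol (real s)"
  obtain m where m: "hausdorff_measure s A = ennreal m" "0 \<le> m"
    using finite by (cases "hausdorff_measure s A") auto
  define M where "M = K * (m + 1)"
  have "0 \<le> M"
    using m by (simp add: M_def K_def)
  have bound: "emeasure lborel A \<le> ennreal (\<delta> * M)" if "0 < \<delta>" for \<delta>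
  proof -
    have "hausdorff_pre s \<delta> A \<le> hausdorff_measure s A"
      unfolding hausdorff_measure_def using that by (intro SUP_upper) auto
    also have "\<dots> < ennreal (m + 1)"
      using m by simp
    finally obtain C :: "nat \<Rightarrow> 'a set" where
      cover: "A \<subseteq> (\<Union>i. C i)" "\<And>i. bounded (C i) \<and> diameter (C i) \<le> \<delta>" and
      sum: "(\<Sum>i. ennreal (unit_ball_vol (real s) * (diameter (C i) / 2) ^ s)) < ennreal (m + 1)"
      unfolding hausdorff_pre_def by (auto simp: INF_less_iff)
    have "emeasure lborel A \<le> ennreal (\<delta> * K) * (\<Sum>i. ennreal (unit_ball_vol (real s) * (diameter (C i) / 2) ^ s))"
      unfolding K_def by (rule emeasure_lborel_le_cover_sum[OF dim cover])
    also have "\<dots> \<le> ennreal (\<delta> * K) * ennreal (m + 1)"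
      using sum by (intro mult_left_mono) auto
    also have "\<dots> = ennreal (\<delta> * M)"
      using that m ennreal_mult[of "\<delta> * K" "m + 1"] by (simp add: M_def K_def mult.assoc)
    finally show ?thesis .
  qed
  have "emeasure lborel A \<le> 0 + ennreal e" if "0 < e" for e
  proof -
    have "e / (M + 1) * M \<le> e"
      using \<open>0 \<le> M\<close> \<open>0 < e\<close> by (simp add: field_simps)
    then show ?thesis
      using bound[of "e / (M + 1)"] \<open>0 \<le> M\<close> \<open>0 < e\<close> by (simp add: order_trans ennreal_leI)
  qed
  then have "emeasure lborel A \<le> 0"
    by (rule ennreal_le_epsilon) simp
  then show ?thesis
    by simp
qed

lemma infsum_le_card_mult:
  fixes f :: "'a \<Rightarrow> ennreal"
  assumes "finite G" and "\<And>x. x \<in> A \<Longrightarrow> x \<notin> G \<Longrightarrow> f x = 0"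
    and "\<And>x. x \<in> A \<Longrightarrow> f x \<le> ennreal M" and "0 \<le> M"
  shows "infsum f A \<le> ennreal (real (card G) * M)"
proof -
  have "infsum f A = infsum f (A \<inter> G)"
    using assms(2) by (intro infsum_cong_neutral) auto
  also have "\<dots> = sum f (A \<inter> G)"
    using assms(1) by simp
  also have "\<dots> \<le> (\<Sum>x\<in>A \<inter> G. ennreal M)"
    using assms(3) by (intro sum_mono) auto
  also have "\<dots> = ennreal (real (card (A \<inter> G)) * M)"
    using assms(4) by (simp add: ennreal_mult ennreal_of_nat_eq_real_of_nat)
  also have "\<dots> \<le> ennreal (real (card G) * M)"
    using assms(1,4) by (intro ennreal_leI mult_right_mono) (auto intro: card_mono)
  finally show ?thesis .
qed

lemma prod_UNIV_two_points:
  fixes w :: "'m::finite \<Rightarrow> 'a::comm_monoid_mult"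
  assumes "i \<noteq> j" and "\<And>l. l \<noteq> i \<Longrightarrow> l \<noteq> j \<Longrightarrow> w l = c"
  shows "(\<Prod>l\<in>UNIV. w l) = w i * w j * c ^ (CARD('m) - 2)"
proof -
  have "(\<Prod>l\<in>UNIV. w l) = w i * (w j * (\<Prod>l\<in>UNIV - {i} - {j}. w l))"
    using \<open>i \<noteq> j\<close> by (simp add: prod.remove[of UNIV i] prod.remove[of "UNIV - {i}" j])
  also have "(\<Prod>l\<in>UNIV - {i} - {j}. w l) = c ^ (CARD('m) - 2)"
    using assms by (simp add: card_Diff_subset numeral_2_eq_2)
  finally show ?thesis
    by (simp add: mult.assoc)
qed

lemma plane0_inter_subset_frontier:
  assumes "closed C" and "C \<subseteq> half_space"
  shows "C \<inter> plane0 \<subseteq> frontier C"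
proof
  fix x
  assume x: "x \<in> C \<inter> plane0"
  have "x \<notin> interior C"
  proof
    assume "x \<in> interior C"
    then obtain e where "0 < e" "ball x e \<subseteq> C"
      by (meson open_contains_ball open_interior interior_subset subset_trans)
    moreover have "x - (e / 2) *\<^sub>R axis None 1 \<in> ball x e"
      using \<open>0 < e\<close> by (simp add: dist_norm)
    ultimately have "x - (e / 2) *\<^sub>R axis None 1 \<in> half_space"
      using assms(2) by blast
    then show False
      using x \<open>0 < e\<close> by (simp add: half_space_def plane0_def)
  qed
  then show "x \<in> frontier C"
    using x \<open>closed C\<close> by (simp add: frontier_def)
qed

lemma inter_subset_frontiers:
  assumes "closed C" "closed N" "interior C \<inter> interior N = {}"
  shows "C \<inter> N \<subseteq> frontier C \<union> frontier N"
  using assms by (auto simp: frontier_def)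

definition near_face :: "real \<Rightarrow> real \<Rightarrow> ('n::finite option \<Rightarrow> int) \<Rightarrow> 'n option \<Rightarrow> bool \<Rightarrow> real^('n option) \<Rightarrow> bool" where
  "near_face h H k l a x \<longleftrightarrow> \<bar>x $ l - H * (of_int (k l) + of_bool a)\<bar> \<le> h"

lemma cube_coord:
  assumes "p \<in> cube H k"
  shows "H * of_int (k l) \<le> p $ l" "p $ l \<le> H * (of_int (k l) + 1)"
  using assms by (auto simp: cube_def)

lemma near_face_if_cube_index_differs:
  assumes "0 < H" "p \<in> cube H k" "q \<in> cube H k'" "k' l \<noteq> k l"
    and "\<bar>x $ l - p $ l\<bar> \<le> h" "\<bar>x $ l - q $ l\<bar> \<le> h"
  shows "\<exists>a. near_face h H k l a x"
proof (cases "k l < k' l")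
  case True
  then have "H * (of_int (k l) + 1) \<le> H * of_int (k' l)"
    using \<open>0 < H\<close> by (intro mult_left_mono) linarith+
  then have "near_face h H k l True x"
    using assms(5,6) cube_coord[OF assms(2), of l] cube_coord[OF assms(3), of l]
    unfolding near_face_def by (simp only: of_bool_eq add_0_right abs_le_iff) linarith
  then show ?thesis ..
next
  case False
  then have "H * (of_int (k' l) + 1) \<le> H * of_int (k l)"
    using \<open>0 < H\<close> \<open>k' l \<noteq> k l\<close> by (intro mult_left_mono) linarith+
  then have "near_face h H k l False x"
    using assms(5,6) cube_coord[OF assms(2), of l] cube_coord[OF assms(3), of l]
    unfolding near_face_def by (simp only: of_bool_eq add_0_right abs_le_iff) linarith
  then show ?thesis ..
qed

lemma cube_index_adjacent:
  assumes "0 < H" "2 * h < H" "p \<in> cube H k" "q \<in> cube H k'" "\<bar>p $ l - q $ l\<bar> \<le> 2 * h"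
  shows "\<bar>k' l - k l\<bar> \<le> 1"
proof -
  have "H * of_int (k' l - k l) < H * 2" "H * of_int (k l - k' l) < H * 2"
    using assms(2,5) cube_coord[OF assms(3), of l] cube_coord[OF assms(4), of l]
    by (simp_all only: of_int_diff right_diff_distrib distrib_left abs_le_iff mult_1_right) linarith+
  then have "of_int (k' l - k l) < (2::real)" "of_int (k l - k' l) < (2::real)"
    using \<open>0 < H\<close> by (simp_all only: mult_less_cancel_left_pos)
  then show ?thesis
    by linarith
qed

lemma near_face_if_not_in_halfcyl:
  assumes "0 < H" "p \<in> cube H k" "\<And>l. \<bar>x $ l - p $ l\<bar> \<le> h"
    and "x \<in> half_space" "x \<notin> halfcyl H (h / H) k i s"
    and "if s then x $ i > H * (of_int (k i) + 1/2) else x $ i < H * (of_int (k i) + 1/2)"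
  shows "\<exists>j a. j \<noteq> i \<and> near_face h H k j a x"
proof -
  obtain j where "j \<noteq> i" and "\<not> (H * (of_int (k j) + h / H) < x $ j \<and> x $ j < H * (of_int (k j) + 1 - h / H))"
    using assms(4-6) by (auto simp: halfcyl_def)
  moreover have "H * (of_int (k j) + h / H) = H * of_int (k j) + h"
    "H * (of_int (k j) + 1 - h / H) = H * (of_int (k j) + 1) - h"
    using \<open>0 < H\<close> by (simp_all add: field_simps)
  ultimately have "near_face h H k j False x \<or> near_face h H k j True x"
    using assms(3)[of j] cube_coord[OF assms(2), of j]
    unfolding near_face_def by (simp only: of_bool_eq add_0_right abs_le_iff) linarith
  with \<open>j \<noteq> i\<close> show ?thesis
    by blast
qed

definition edge_cells :: "(real^('n::finite option)) set set \<Rightarrow> real \<Rightarrow> real \<Rightarrow> ('n option \<Rightarrow> int) \<Rightarrow> (real^('n option)) set set" where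
  "edge_cells \<C> h H k = {C \<in> \<C>. C \<inter> cube H k \<noteq> {} \<and>
     (\<exists>x\<in>C. \<exists>i j a b. i \<noteq> j \<and> near_face h H k i a x \<and> near_face h H k j b x)}"

definition edge_faces :: "(real^('n::finite option)) set set \<Rightarrow> real \<Rightarrow> real \<Rightarrow> ('n option \<Rightarrow> int) \<Rightarrow> (real^('n option)) set face set" where
  "edge_faces \<C> h H k = {IntF C N | C N. C \<in> edge_cells \<C> h H k \<and> N \<in> \<C> \<and> N \<inter> C \<noteq> {}} \<union> ToBd ` edge_cells \<C> h H k"

locale cell_grid =
  fixes c1 c2 h :: real and \<C> :: "(real^('n::finite option)) set set"
  assumes grid: "is_grid c1 c2 h \<C>" and c1_pos: "0 < c1" and c2_pos: "0 < c2" and h_pos: "0 < h"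
begin

lemma cell_props:
  assumes "C \<in> \<C>"
  shows "closed C" "bounded C" "C \<subseteq> half_space" "diameter C \<le> h"
    "measure lebesgue C \<ge> c1 * h ^ (CARD('n) + 1)"
    "hausdorff_measure CARD('n) (frontier C) \<le> ennreal (c2 * h ^ CARD('n))"
  using grid assms unfolding is_grid_def by (auto simp del: One_nat_def)

lemma cells_inter_subset_frontiers:
  assumes "C \<in> \<C>" "N \<in> \<C>" "C \<noteq> N"
  shows "C \<inter> N \<subseteq> frontier C \<union> frontier N"
  using assms grid cell_props(1) unfolding is_grid_def by (intro inter_subset_frontiers) auto

lemma negligible_frontier_cell:
  assumes "C \<in> \<C>"
  shows "negligible (frontier C)"
proof -
  have "hausdorff_measure CARD('n) (frontier C) < \<infinity>"
    using cell_props(6)[OF assms] by (simp add: le_less_trans)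
  then have "emeasure lborel (frontier C) = 0"
    by (intro hausdorff_measure_finite_imp_null) simp
  then show ?thesis
    by (simp add: negligible_iff_null_sets null_sets_completionI null_setsI)
qed

lemma negligible_cells_inter:
  assumes "C \<in> \<C>" "N \<in> \<C>" "C \<noteq> N"
  shows "negligible (C \<inter> N)"
  using cells_inter_subset_frontiers[OF assms] negligible_frontier_cell assms
  by (meson negligible_Un negligible_subset)

lemma coord_dist_le:
  assumes "C \<in> \<C>" "y \<in> C" "z \<in> C"
  shows "\<bar>y $ l - z $ l\<bar> \<le> h"
proof -
  have "\<bar>y $ l - z $ l\<bar> \<le> dist y z"
    using component_le_norm_cart[of "y - z" l] by (simp add: dist_norm)
  also have "\<dots> \<le> h"
    using cell_props(2,4)[OF assms(1)] diameter_bounded_bound[OF _ assms(2,3)] by linarith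
  finally show ?thesis .
qed

lemma card_cells_le_measure:
  assumes "S \<subseteq> \<C>" and "\<And>C. C \<in> S \<Longrightarrow> C \<subseteq> B" and "B \<in> lmeasurable"
  shows "finite S \<and> real (card S) * (c1 * h ^ (CARD('n) + 1)) \<le> measure lebesgue B"
proof -
  have bound: "real (card T) * (c1 * h ^ (CARD('n) + 1)) \<le> measure lebesgue B"
    if "finite T" "T \<subseteq> S" for T
  proof -
    have lmeas: "C \<in> lmeasurable" if "C \<in> T" for C
      using that \<open>T \<subseteq> S\<close> assms(1) cell_props(1,2) by (intro lmeasurable_compact) (auto simp: compact_eq_bounded_closed)
    have "real (card T) * (c1 * h ^ (CARD('n) + 1)) \<le> (\<Sum>C\<in>T. measure lebesgue C)"
      using that assms(1) cell_props(5) by (simp add: sum_bounded_below subset_iff)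
    also have "\<dots> = measure lebesgue (\<Union>T)"
    proof (rule measure_negligible_finite_Union[symmetric])
      show "pairwise (\<lambda>C N. negligible (C \<inter> N)) T"
        using that assms(1) negligible_cells_inter unfolding pairwise_def by blast
    qed (use that lmeas in auto)
    also have "\<dots> \<le> measure lebesgue B"
      using that assms lmeas by (intro measure_mono_fmeasurable) auto
    finally show ?thesis .
  qed
  have "finite S"
  proof (rule ccontr)
    assume "infinite S"
    obtain N :: nat where N: "measure lebesgue B / (c1 * h ^ (CARD('n) + 1)) < N"
      using reals_Archimedean2 by blast
    obtain T where "T \<subseteq> S" "finite T" "card T = N"
      using infinite_arbitrarily_large[OF \<open>infinite S\<close>] by blast
    with bound[of T] N c1_pos h_pos show False
      by (simp add: field_simps)
  qed
  with bound[of S] show ?thesis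
    by simp
qed

lemma cell_subset_cbox:
  assumes "C \<in> \<C>" and "\<And>l. \<exists>q\<in>C. \<bar>q $ l - m l\<bar> \<le> r l"
  shows "C \<subseteq> cbox (\<chi> l. m l - (r l + h)) (\<chi> l. m l + (r l + h))"
proof
  fix y
  assume "y \<in> C"
  have "m l - (r l + h) \<le> y $ l \<and> y $ l \<le> m l + (r l + h)" for l
  proof -
    obtain q where "q \<in> C" "\<bar>q $ l - m l\<bar> \<le> r l"
      using assms(2) by blast
    with coord_dist_le[OF assms(1) \<open>y \<in> C\<close> \<open>q \<in> C\<close>, of l] show ?thesis
      by (simp add: abs_le_iff)
  qed
  then show "y \<in> cbox (\<chi> l. m l - (r l + h)) (\<chi> l. m l + (r l + h))"
    by (simp add: mem_box_cart)
qed

lemma card_cells_near_le: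
  assumes "S \<subseteq> \<C>" and "\<And>C l. C \<in> S \<Longrightarrow> \<exists>q\<in>C. \<bar>q $ l - m l\<bar> \<le> r l" and "\<And>l. 0 \<le> r l"
  shows "finite S \<and> real (card S) * (c1 * h ^ (CARD('n) + 1)) \<le> (\<Prod>l\<in>UNIV. 2 * (r l + h))"
proof -
  have "measure lebesgue (cbox (\<chi> l. m l - (r l + h)) (\<chi> l. m l + (r l + h))) = (\<Prod>l\<in>UNIV. 2 * (r l + h))"
    using assms(3) h_pos by (simp add: content_cbox_cart interval_ne_empty_cart(1) add_nonneg_nonneg)
  moreover have "finite S \<and> real (card S) * (c1 * h ^ (CARD('n) + 1))
      \<le> measure lebesgue (cbox (\<chi> l. m l - (r l + h)) (\<chi> l. m l + (r l + h)))"
    using assms(1,2) by (intro card_cells_le_measure cell_subset_cbox) auto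
  ultimately show ?thesis
    by simp
qed

lemma card_neighbours_le:
  assumes "C \<in> \<C>" and "p \<in> C"
  shows "finite {N \<in> \<C>. N \<inter> C \<noteq> {}} \<and> real (card {N \<in> \<C>. N \<inter> C \<noteq> {}}) * c1 \<le> 4 ^ (CARD('n) + 1)"
proof -
  define S where "S = {N \<in> \<C>. N \<inter> C \<noteq> {}}"
  have "\<exists>q\<in>N. \<bar>q $ l - p $ l\<bar> \<le> h" if "N \<in> S" for N l
    using that coord_dist_le[OF assms(1) _ assms(2)] by (auto simp: S_def)
  then have "finite S \<and> real (card S) * (c1 * h ^ (CARD('n) + 1)) \<le> (\<Prod>l\<in>(UNIV :: 'n option set). 2 * (h + h))"
    using card_cells_near_le[of S "\<lambda>l. p $ l" "\<lambda>_. h"] h_pos by (auto simp: S_def)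
  moreover have "(\<Prod>l\<in>(UNIV :: 'n option set). 2 * (h + h)) = 4 ^ (CARD('n) + 1) * h ^ (CARD('n) + 1)"
    by (simp add: power_mult_distrib)
  ultimately have "finite S \<and> (real (card S) * c1) * h ^ (CARD('n) + 1) \<le> 4 ^ (CARD('n) + 1) * h ^ (CARD('n) + 1)"
    by (simp add: mult_ac)
  then show ?thesis
    unfolding S_def using mult_right_le_imp_le[OF _ zero_less_power[OF h_pos]] by blast
qed

lemma card_cells_near_two_faces_le:
  assumes "i \<noteq> j" and "2 * h < H" and "S \<subseteq> \<C>"
    and "\<And>C l. C \<in> S \<Longrightarrow> \<exists>q\<in>C. \<bar>q $ l - m l\<bar> \<le> (if l = i \<or> l = j then h else H / 2)"
  shows "finite S \<and> real (card S) * c1 * h ^ (CARD('n) - 1) \<le> 16 * (2 * H) ^ (CARD('n) - 1)"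
proof -
  define r where "r l = (if l = i \<or> l = j then h else H / 2)" for l
  have cells: "finite S \<and> real (card S) * (c1 * h ^ (CARD('n) + 1)) \<le> (\<Prod>l\<in>UNIV. 2 * (r l + h))"
  proof (rule card_cells_near_le[OF assms(3)])
    show "\<exists>q\<in>C. \<bar>q $ l - m l\<bar> \<le> r l" if "C \<in> S" for C l
      using assms(4)[OF that] unfolding r_def .
    show "0 \<le> r l" for l
      using h_pos assms(2) by (simp add: r_def)
  qed
  have "CARD('n) + 1 = (CARD('n) - 1) + 2"
    using zero_less_card_finite[where 'a = 'n] by linarith
  then have "(real (card S) * c1 * h ^ (CARD('n) - 1)) * (h * h) = real (card S) * (c1 * h ^ (CARD('n) + 1))"
    by (simp only: power_add power2_eq_square mult_ac)
  also have "\<dots> \<le> (\<Prod>l\<in>UNIV. 2 * (r l + h))"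
    using cells by simp
  also have "\<dots> = (4 * h) * (4 * h) * (H + 2 * h) ^ (CARD('n) - 1)"
    using assms(1) by (subst prod_UNIV_two_points[where c = "H + 2 * h"]) (auto simp: r_def)
  also have "\<dots> \<le> (4 * h) * (4 * h) * (2 * H) ^ (CARD('n) - 1)"
    using assms(2) h_pos by (intro mult_left_mono power_mono) auto
  also have "\<dots> = (16 * (2 * H) ^ (CARD('n) - 1)) * (h * h)"
    by (simp add: algebra_simps)
  finally show ?thesis
    using cells mult_right_le_imp_le[OF _ mult_pos_pos[OF h_pos h_pos]] by blast
qed

lemma card_cells_near_edge_le:
  fixes H :: real and k :: "'n option \<Rightarrow> int" and a b :: bool
  assumes "2 * h < H" and "i \<noteq> j"
  defines "S \<equiv> {C \<in> \<C>. C \<inter> cube H k \<noteq> {} \<and> (\<exists>x\<in>C. near_face h H k i a x \<and> near_face h H k j b x)}"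
  shows "finite S \<and> real (card S) * c1 * h ^ (CARD('n) - 1) \<le> 16 * (2 * H) ^ (CARD('n) - 1)"
proof (rule card_cells_near_two_faces_le[OF \<open>i \<noteq> j\<close> assms(1)])
  define m where "m l = (if l = i then H * (of_int (k i) + of_bool a)
      else if l = j then H * (of_int (k j) + of_bool b) else H * (of_int (k l) + 1 / 2))" for l
  show "S \<subseteq> \<C>"
    by (auto simp: S_def)
  fix C l
  assume "C \<in> S"
  then obtain p x where C: "p \<in> C" "p \<in> cube H k" "x \<in> C" "near_face h H k i a x" "near_face h H k j b x"
    by (auto simp: S_def)
  show "\<exists>q\<in>C. \<bar>q $ l - m l\<bar> \<le> (if l = i \<or> l = j then h else H / 2)"
  proof (cases "l = i \<or> l = j")
    case True
    then show ?thesis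
      using C(3-5) by (auto simp: m_def near_face_def)
  next
    case False
    have "\<bar>p $ l - H * (of_int (k l) + 1 / 2)\<bar> \<le> H / 2"
      using cube_coord[OF C(2), of l] by (simp only: abs_le_iff distrib_left mult_1_right) linarith
    with False C(1) show ?thesis
      by (auto simp: m_def)
  qed
qed

lemma card_edge_cells_le:
  fixes H :: real
  assumes "2 * h < H"
  shows "finite (edge_cells \<C> h H k) \<and>
    real (card (edge_cells \<C> h H k)) * c1 * h ^ (CARD('n) - 1) \<le> 64 * (CARD('n) + 1)\<^sup>2 * (2 * H) ^ (CARD('n) - 1)"
proof -
  define I where "I = ({(i, j, a, b). i \<noteq> j} :: ('n option \<times> 'n option \<times> bool \<times> bool) set)"
  define T where "T = (\<lambda>(i, j, a, b). {C \<in> \<C>. C \<inter> cube H k \<noteq> {} \<and>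
      (\<exists>x\<in>C. near_face h H k i a x \<and> near_face h H k j b x)})"
  have T: "finite (T \<iota>) \<and> real (card (T \<iota>)) * c1 * h ^ (CARD('n) - 1) \<le> 16 * (2 * H) ^ (CARD('n) - 1)"
    if "\<iota> \<in> I" for \<iota>
    using that card_cells_near_edge_le[OF assms] by (auto simp: I_def T_def)
  have edge: "edge_cells \<C> h H k = (\<Union>\<iota>\<in>I. T \<iota>)"
    by (auto simp: edge_cells_def I_def T_def)
  have "card I \<le> CARD('n option \<times> 'n option \<times> bool \<times> bool)"
    by (rule card_mono) auto
  then have "card I \<le> 4 * (CARD('n) + 1)\<^sup>2"
    by (simp add: card_option power2_eq_square algebra_simps)
  then have card_I: "real (card I) \<le> 4 * (CARD('n) + 1)\<^sup>2"
    by (metis of_nat_le_iff of_nat_numeral of_nat_mult of_nat_power of_nat_Suc Suc_eq_plus1 add.commute)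
  have "real (card (edge_cells \<C> h H k)) * (c1 * h ^ (CARD('n) - 1))
      \<le> (\<Sum>\<iota>\<in>I. real (card (T \<iota>))) * (c1 * h ^ (CARD('n) - 1))"
    unfolding edge using card_UN_le[of I T] c1_pos h_pos
    by (intro mult_right_mono) (simp_all flip: of_nat_sum)
  also have "\<dots> = (\<Sum>\<iota>\<in>I. real (card (T \<iota>)) * c1 * h ^ (CARD('n) - 1))"
    by (simp add: sum_distrib_right mult.assoc)
  also have "\<dots> \<le> real (card I) * (16 * (2 * H) ^ (CARD('n) - 1))"
    using T sum_mono[of I "\<lambda>\<iota>. real (card (T \<iota>)) * c1 * h ^ (CARD('n) - 1)" "\<lambda>_. 16 * (2 * H) ^ (CARD('n) - 1)"]
    by simp
  also have "\<dots> \<le> 4 * (CARD('n) + 1)\<^sup>2 * (16 * (2 * H) ^ (CARD('n) - 1))"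
    using card_I assms h_pos by (intro mult_right_mono) auto
  finally show ?thesis
    using T unfolding edge by (simp add: mult.assoc)
qed

lemma card_edge_faces_le:
  assumes "finite (edge_cells \<C> h H k)"
  shows "finite (edge_faces \<C> h H k) \<and>
    real (card (edge_faces \<C> h H k)) * c1 \<le> (4 ^ (CARD('n) + 1) + c1) * real (card (edge_cells \<C> h H k))"
proof -
  define E where "E = edge_cells \<C> h H k"
  define Nb where "Nb C = {N \<in> \<C>. N \<inter> C \<noteq> {}}" for C
  have Nb: "finite (Nb C) \<and> real (card (Nb C)) * c1 \<le> 4 ^ (CARD('n) + 1)" if "C \<in> E" for C
    using that card_neighbours_le by (auto simp: E_def Nb_def edge_cells_def)
  have faces: "edge_faces \<C> h H k = (\<lambda>(C, N). IntF C N) ` (SIGMA C:E. Nb C) \<union> ToBd ` E"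
    by (auto simp: edge_faces_def E_def Nb_def)
  have fin: "finite (SIGMA C:E. Nb C)"
    using assms Nb by (auto simp: E_def)
  have "card (edge_faces \<C> h H k) \<le> card (SIGMA C:E. Nb C) + card E"
    unfolding faces by (rule order_trans[OF card_Un_le add_mono[OF card_image_le card_image_le]])
      (use fin assms E_def in auto)
  also have "card (SIGMA C:E. Nb C) = (\<Sum>C\<in>E. card (Nb C))"
    using assms Nb by (simp add: E_def card_SigmaI)
  finally have "real (card (edge_faces \<C> h H k)) \<le> (\<Sum>C\<in>E. real (card (Nb C))) + real (card E)"
    by (metis of_nat_add of_nat_le_iff of_nat_sum)
  then have "real (card (edge_faces \<C> h H k)) * c1 \<le> ((\<Sum>C\<in>E. real (card (Nb C))) + real (card E)) * c1"
    using c1_pos by (intro mult_right_mono) auto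
  also have "\<dots> = (\<Sum>C\<in>E. real (card (Nb C)) * c1) + real (card E) * c1"
    by (simp add: sum_distrib_right distrib_right)
  also have "\<dots> \<le> (\<Sum>C\<in>E. 4 ^ (CARD('n) + 1)) + real (card E) * c1"
    using Nb by (intro add_right_mono sum_mono) auto
  finally show ?thesis
    using fin assms by (simp add: faces E_def algebra_simps)
qed

lemma hausdorff_cells_inter_le:
  assumes "C \<in> \<C>" "N \<in> \<C>" "C \<noteq> N"
  shows "hausdorff_measure CARD('n) (C \<inter> N) \<le> ennreal (2 * c2 * h ^ CARD('n))"
proof -
  have "hausdorff_measure CARD('n) (C \<inter> N) \<le> hausdorff_measure CARD('n) (frontier C \<union> frontier N)"
    using cells_inter_subset_frontiers[OF assms] by (rule hausdorff_measure_mono)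
  also have "\<dots> \<le> hausdorff_measure CARD('n) (frontier C) + hausdorff_measure CARD('n) (frontier N)"
    by (rule hausdorff_measure_Un_le)
  also have "\<dots> \<le> ennreal (c2 * h ^ CARD('n)) + ennreal (c2 * h ^ CARD('n))"
    using assms by (intro add_mono cell_props(6))
  also have "\<dots> = ennreal (2 * c2 * h ^ CARD('n))"
    using c2_pos h_pos by (simp flip: ennreal_plus)
  finally show ?thesis .
qed

lemma hausdorff_cell_plane0_le:
  assumes "C \<in> \<C>"
  shows "hausdorff_measure CARD('n) (C \<inter> plane0) \<le> ennreal (2 * c2 * h ^ CARD('n))"
proof -
  have "hausdorff_measure CARD('n) (C \<inter> plane0) \<le> hausdorff_measure CARD('n) (frontier C)"
    using cell_props(1,3)[OF assms] by (intro hausdorff_measure_mono plane0_inter_subset_frontier)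
  also have "\<dots> \<le> ennreal (c2 * h ^ CARD('n))"
    using assms by (rule cell_props(6))
  also have "\<dots> \<le> ennreal (2 * c2 * h ^ CARD('n))"
    using c2_pos h_pos by (intro ennreal_leI) auto
  finally show ?thesis .
qed

lemma hausdorff_bdry_face_le:
  assumes "F \<in> bdry_block \<C> It k \<union> bdry_dir \<C> It k i s"
  shows "hausdorff_measure CARD('n) (face_set F) \<le> ennreal (2 * c2 * h ^ CARD('n))"
proof -
  from assms consider (inter) C N where "F = IntF C N" "C \<in> \<C>" "N \<in> \<C>" "C \<noteq> N"
    | (plane) C where "F = ToBd C" "C \<in> \<C>"
    by (auto simp: bdry_block_def bdry_dir_def Let_def interior_face_def split: if_splits)
  then show ?thesis
    by cases (simp_all add: face_set_def hausdorff_cells_inter_le hausdorff_cell_plane0_le)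
qed

end

definition face_bound_const :: "nat \<Rightarrow> real \<Rightarrow> real \<Rightarrow> real" where
  "face_bound_const d c1 c2 = 128 * c2 * (4 ^ (d + 1) + c1) * (d + 1)\<^sup>2 * 2 ^ (d - 1) / c1\<^sup>2"

locale cube_block = cell_grid c1 c2 h \<C>
  for c1 c2 h :: real and \<C> :: "(real^('n::finite option)) set set" +
  fixes H :: real and It :: "('n option \<Rightarrow> int) \<Rightarrow> (real^('n option)) set set" and k :: "'n option \<Rightarrow> int"
  assumes cells_small: "2 * h < H" and partition: "valid_partition H \<C> It" and k_idx: "k \<in> idx_set"
begin

lemma H_pos: "0 < H"
  using cells_small h_pos by linarith

lemma block_cellD:
  assumes "C \<in> It k'" "k' \<in> idx_set"
  shows "C \<in> \<C>" "\<exists>p\<in>C. p \<in> cube H k'"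
  using assms partition unfolding valid_partition_def by blast+

lemma edge_cell_if_outside_halfcyl:
  assumes "C \<in> It k" "x \<in> C" "x \<notin> halfcyl H (h / H) k i s" "near_face h H k i a x"
    and "if s then x $ i > H * (of_int (k i) + 1/2) else x $ i < H * (of_int (k i) + 1/2)"
  shows "C \<in> edge_cells \<C> h H k"
proof -
  obtain p where p: "p \<in> C" "p \<in> cube H k"
    using block_cellD(2)[OF assms(1) k_idx] by blast
  have C: "C \<in> \<C>"
    using block_cellD(1)[OF assms(1) k_idx] .
  have "x \<in> half_space"
    using cell_props(3)[OF C] assms(2) by blast
  with near_face_if_not_in_halfcyl[OF H_pos p(2) coord_dist_le[OF C assms(2) p(1)] _ assms(3,5)]
  obtain j b where "j \<noteq> i" "near_face h H k j b x"
    by blast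
  with assms(2,4) C p show ?thesis
    unfolding edge_cells_def by blast
qed

lemma IntF_outside_halfcyl_edge_face:
  assumes k': "k' = k(i := if s then k i + 1 else k i - 1)" "k' \<in> idx_set"
    and CN: "interior_face \<C> C N" "C \<in> It k" "N \<in> It k'"
    and x: "x \<in> C" "x \<in> N" "x \<notin> halfcyl H (h / H) k i s"
  shows "IntF C N \<in> edge_faces \<C> h H k"
proof -
  have N: "N \<in> \<C>"
    using CN(1) by (simp add: interior_face_def)
  obtain p where p: "p \<in> C" "p \<in> cube H k"
    using block_cellD(2)[OF CN(2) k_idx] by blast
  obtain q where q: "q \<in> N" "q \<in> cube H k'"
    using block_cellD(2)[OF CN(3) k'(2)] by blast
  have xq: "\<bar>x $ i - q $ i\<bar> \<le> h"
    using coord_dist_le[OF N x(2) q(1)] .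
  have "k' i \<noteq> k i"
    using k'(1) by simp
  then obtain a where "near_face h H k i a x"
    using near_face_if_cube_index_differs[OF H_pos p(2) q(2) _ coord_dist_le[OF block_cellD(1)[OF CN(2) k_idx] x(1) p(1)] xq]
    by blast
  moreover have "if s then x $ i > H * (of_int (k i) + 1/2) else x $ i < H * (of_int (k i) + 1/2)"
    using xq cube_coord[OF q(2), of i] cells_small k'(1) by (auto simp: abs_le_iff algebra_simps)
  ultimately have "C \<in> edge_cells \<C> h H k"
    by (rule edge_cell_if_outside_halfcyl[OF CN(2) x(1,3)])
  with x(1,2) N show ?thesis
    unfolding edge_faces_def by blast
qed

lemma ToBd_outside_halfcyl_edge_face:
  assumes "k None = 0" "C \<in> It k" "x \<in> C" "x \<in> plane0" "x \<notin> halfcyl H (h / H) k None False"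
  shows "ToBd C \<in> edge_faces \<C> h H k"
proof -
  have "C \<in> edge_cells \<C> h H k"
    using assms H_pos h_pos
    by (intro edge_cell_if_outside_halfcyl[OF assms(2,3,5), of False]) (auto simp: near_face_def plane0_def)
  then show ?thesis
    unfolding edge_faces_def by blast
qed

lemma bdry_dir_outside_halfcyl_edge_face:
  assumes "F \<in> bdry_dir \<C> It k i s" "x \<in> face_set F" "x \<notin> halfcyl H (h / H) k i s"
  shows "F \<in> edge_faces \<C> h H k"
proof (cases "k(i := if s then k i + 1 else k i - 1) \<in> idx_set")
  case True
  then show ?thesis
    using assms IntF_outside_halfcyl_edge_face[OF refl True]
    by (auto simp: bdry_dir_def Let_def face_set_def)
next
  case False
  then have "i = None" "\<not> s" "k None = 0"
    using k_idx by (auto simp: idx_set_def split: if_splits)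
  with False assms show ?thesis
    using ToBd_outside_halfcyl_edge_face by (auto simp: bdry_dir_def face_set_def)
qed

lemma ToBd_bdry_block_in_bdry_dir:
  assumes "ToBd C \<in> bdry_block \<C> It k"
  shows "ToBd C \<in> bdry_dir \<C> It k None False"
proof -
  have C: "C \<in> It k" "C \<in> \<C>" "C \<inter> plane0 \<noteq> {}"
    using assms by (auto simp: bdry_block_def)
  have "k None = 0"
  proof (rule ccontr)
    assume "k None \<noteq> 0"
    then have "H \<le> H * of_int (k None)"
      using k_idx H_pos by (simp add: idx_set_def)
    moreover obtain y where "y \<in> C" "y $ None = 0"
      using C(3) by (auto simp: plane0_def)
    moreover obtain p where "p \<in> C" "p \<in> cube H k"
      using block_cellD(2)[OF C(1) k_idx] by blast
    ultimately show False
      using coord_dist_le[OF C(2) \<open>y \<in> C\<close> \<open>p \<in> C\<close>, of None] cube_coord[of p H k None] cells_small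
      by auto
  qed
  then show ?thesis
    using C by (auto simp: bdry_dir_def idx_set_def)
qed

lemma IntF_in_bdry_dir_if_adjacent:
  assumes CN: "interior_face \<C> C N" "C \<in> It k" "N \<in> It k'" "k' \<in> idx_set" "x \<in> C" "x \<in> N"
    and i: "k' i \<noteq> k i" "\<And>j. j \<noteq> i \<Longrightarrow> k' j = k j"
  shows "IntF C N \<in> bdry_dir \<C> It k i (k i < k' i)"
proof -
  obtain p where p: "p \<in> C" "p \<in> cube H k"
    using block_cellD(2)[OF CN(2) k_idx] by blast
  obtain q where q: "q \<in> N" "q \<in> cube H k'"
    using block_cellD(2)[OF CN(3,4)] by blast
  have "\<bar>p $ i - q $ i\<bar> \<le> 2 * h"
    using coord_dist_le[OF block_cellD(1)[OF CN(2) k_idx] CN(5) p(1), of i]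
      coord_dist_le[OF block_cellD(1)[OF CN(3,4)] CN(6) q(1), of i]
    by linarith
  then have "\<bar>k' i - k i\<bar> \<le> 1"
    by (rule cube_index_adjacent[OF H_pos cells_small p(2) q(2)])
  with i have "k' = k(i := if k i < k' i then k i + 1 else k i - 1)"
    by (auto simp: fun_eq_iff)
  with CN show ?thesis
    by (auto simp: bdry_dir_def Let_def)
qed

lemma IntF_bdry_block_edge_face:
  assumes "IntF C N \<in> bdry_block \<C> It k" "\<And>j s. IntF C N \<notin> bdry_dir \<C> It k j s" "x \<in> C" "x \<in> N"
  shows "IntF C N \<in> edge_faces \<C> h H k"
proof -
  have CN: "interior_face \<C> C N" "C \<in> It k" "N \<notin> It k"
    using assms(1) by (auto simp: bdry_block_def)
  then have "C \<in> \<C>" "N \<in> \<C>"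
    by (auto simp: interior_face_def)
  then obtain k' where k': "k' \<in> idx_set" "N \<in> It k'"
    using partition by (auto simp: valid_partition_def)
  have "k' \<noteq> k"
    using k'(2) CN(3) by blast
  then obtain i where i: "k' i \<noteq> k i"
    by (meson ext)
  have "\<not> (\<forall>j. j \<noteq> i \<longrightarrow> k' j = k j)"
    using IntF_in_bdry_dir_if_adjacent[OF CN(1,2) k'(2,1) assms(3,4) i] assms(2) by blast
  then obtain j where "j \<noteq> i" "k' j \<noteq> k j"
    by blast
  obtain p where p: "p \<in> C" "p \<in> cube H k"
    using block_cellD(2)[OF CN(2) k_idx] by blast
  obtain q where q: "q \<in> N" "q \<in> cube H k'"
    using block_cellD(2)[OF k'(2,1)] by blast
  have "\<bar>x $ l - p $ l\<bar> \<le> h" "\<bar>x $ l - q $ l\<bar> \<le> h" for l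
    using coord_dist_le \<open>C \<in> \<C>\<close> \<open>N \<in> \<C>\<close> assms(3,4) p(1) q(1) by blast+
  with i \<open>k' j \<noteq> k j\<close> obtain a b where "near_face h H k i a x" "near_face h H k j b x"
    using near_face_if_cube_index_differs[OF H_pos p(2) q(2)] by metis
  moreover have "C \<inter> cube H k \<noteq> {}"
    using p by blast
  ultimately have "C \<in> edge_cells \<C> h H k"
    using \<open>j \<noteq> i\<close> assms(3) \<open>C \<in> \<C>\<close> unfolding edge_cells_def by blast
  with assms(3,4) \<open>N \<in> \<C>\<close> show ?thesis
    unfolding edge_faces_def by blast
qed

lemma bdry_block_rest_edge_face:
  assumes "F \<in> bdry_block \<C> It k - (\<Union>j. bdry_dir \<C> It k j False \<union> bdry_dir \<C> It k j True)"
    and "x \<in> face_set F"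
  shows "F \<in> edge_faces \<C> h H k"
proof -
  have not_dir: "F \<notin> bdry_dir \<C> It k j s" for j s
    using assms(1) by (cases s) auto
  from assms(1) consider C where "F = ToBd C" | C N where "F = IntF C N"
    by (auto simp: bdry_block_def)
  then show ?thesis
  proof cases
    case 1
    then show ?thesis
      using ToBd_bdry_block_in_bdry_dir not_dir assms(1) by blast
  next
    case 2
    then show ?thesis
      using IntF_bdry_block_edge_face not_dir assms by (auto simp: face_set_def)
  qed
qed

lemma finite_edge_faces: "finite (edge_faces \<C> h H k)"
  using card_edge_cells_le[OF cells_small] card_edge_faces_le by blast

lemma card_edge_faces_measure_le:
  "real (card (edge_faces \<C> h H k)) * (2 * c2 * h ^ CARD('n))
     \<le> face_bound_const CARD('n) c1 c2 * (h / H) * H ^ CARD('n)"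
proof -
  define d where "d = CARD('n)"
  define E where "E = real (card (edge_cells \<C> h H k))"
  define F where "F = real (card (edge_faces \<C> h H k))"
  have cells: "E * c1 * h ^ (d - 1) \<le> 64 * (d + 1)\<^sup>2 * (2 * H) ^ (d - 1)"
    using card_edge_cells_le[OF cells_small] by (simp add: E_def d_def)
  have faces: "F * c1 \<le> (4 ^ (d + 1) + c1) * E"
    using card_edge_cells_le[OF cells_small] card_edge_faces_le by (simp add: E_def F_def d_def)
  have d: "h ^ d = h * h ^ (d - 1)" "H ^ d = H * H ^ (d - 1)"
    using zero_less_card_finite[where 'a = 'n] by (simp_all add: d_def power_eq_if)
  have "F * (2 * c2 * h ^ d) = 2 * c2 * h / c1\<^sup>2 * ((F * c1) * (c1 * h ^ (d - 1)))"
    using c1_pos by (simp add: d field_simps power2_eq_square)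
  also have "\<dots> \<le> 2 * c2 * h / c1\<^sup>2 * (((4 ^ (d + 1) + c1) * E) * (c1 * h ^ (d - 1)))"
    using faces c1_pos c2_pos h_pos by (intro mult_left_mono mult_right_mono) auto
  also have "\<dots> = 2 * c2 * h / c1\<^sup>2 * ((4 ^ (d + 1) + c1) * (E * c1 * h ^ (d - 1)))"
    by (simp add: mult_ac)
  also have "\<dots> \<le> 2 * c2 * h / c1\<^sup>2 * ((4 ^ (d + 1) + c1) * (64 * (d + 1)\<^sup>2 * (2 * H) ^ (d - 1)))"
    using cells c1_pos c2_pos h_pos by (intro mult_left_mono) auto
  also have "\<dots> = face_bound_const d c1 c2 * h * H ^ (d - 1)"
    by (simp add: face_bound_const_def power_mult_distrib field_simps)
  also have "\<dots> = face_bound_const d c1 c2 * (h / H) * H ^ d"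
    using H_pos by (simp add: d)
  finally show ?thesis
    by (simp add: F_def d_def)
qed

lemma infsum_bdry_dir_le:
  "(\<Sum>\<^sub>\<infinity>F\<in>bdry_dir \<C> It k i s. hausdorff_measure CARD('n) (face_set F - halfcyl H (h / H) k i s))
     \<le> ennreal (real (card (edge_faces \<C> h H k)) * (2 * c2 * h ^ CARD('n)))"
proof (rule infsum_le_card_mult[OF finite_edge_faces])
  fix F
  assume F: "F \<in> bdry_dir \<C> It k i s"
  show "hausdorff_measure CARD('n) (face_set F - halfcyl H (h / H) k i s) = 0" if "F \<notin> edge_faces \<C> h H k"
  proof -
    have "face_set F - halfcyl H (h / H) k i s = {}"
      using bdry_dir_outside_halfcyl_edge_face[OF F] that by blast
    then show ?thesis
      by (simp only: hausdorff_measure_empty zero_less_card_finite)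
  qed
  show "hausdorff_measure CARD('n) (face_set F - halfcyl H (h / H) k i s) \<le> ennreal (2 * c2 * h ^ CARD('n))"
    using F hausdorff_bdry_face_le[of F] hausdorff_measure_mono[OF Diff_subset] by (blast intro: order_trans)
qed (use c2_pos h_pos in simp)

lemma infsum_bdry_block_rest_le:
  "(\<Sum>\<^sub>\<infinity>F\<in>bdry_block \<C> It k - (\<Union>j. bdry_dir \<C> It k j False \<union> bdry_dir \<C> It k j True).
       hausdorff_measure CARD('n) (face_set F))
     \<le> ennreal (real (card (edge_faces \<C> h H k)) * (2 * c2 * h ^ CARD('n)))"
proof (rule infsum_le_card_mult[OF finite_edge_faces])
  fix F
  assume F: "F \<in> bdry_block \<C> It k - (\<Union>j. bdry_dir \<C> It k j False \<union> bdry_dir \<C> It k j True)"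
  show "hausdorff_measure CARD('n) (face_set F) = 0" if "F \<notin> edge_faces \<C> h H k"
  proof -
    have "face_set F = {}"
      using bdry_block_rest_edge_face[OF F] that by blast
    then show ?thesis
      by (simp only: hausdorff_measure_empty zero_less_card_finite)
  qed
  show "hausdorff_measure CARD('n) (face_set F) \<le> ennreal (2 * c2 * h ^ CARD('n))"
    using F by (intro hausdorff_bdry_face_le) blast
qed (use c2_pos h_pos in simp)

lemma face_sums_le:
  "(\<forall>i s. (\<Sum>\<^sub>\<infinity>F\<in>bdry_dir \<C> It k i s. hausdorff_measure CARD('n) (face_set F - halfcyl H (h / H) k i s))
       \<le> ennreal (face_bound_const CARD('n) c1 c2 * (h / H) * H ^ CARD('n))) \<and>
   (\<Sum>\<^sub>\<infinity>F\<in>bdry_block \<C> It k - (\<Union>j. bdry_dir \<C> It k j False \<union> bdry_dir \<C> It k j True).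
       hausdorff_measure CARD('n) (face_set F))
     \<le> ennreal (face_bound_const CARD('n) c1 c2 * (h / H) * H ^ CARD('n))"
  using order_trans[OF infsum_bdry_dir_le ennreal_leI[OF card_edge_faces_measure_le]]
    order_trans[OF infsum_bdry_block_rest_le ennreal_leI[OF card_edge_faces_measure_le]]
  by blast

end

theorem mainTheorem3:
  fixes c1 c2 :: real
  assumes "c1 > 0" and "c2 > 0"
  shows "\<exists>c::real. \<forall>H h (\<C> :: (real^('n::finite option)) set set) It k.
     H > 0 \<longrightarrow> 0 < h \<longrightarrow> h \<le> 1 \<longrightarrow> h / H < 1/2 \<longrightarrow>
     is_grid c1 c2 h \<C> \<longrightarrow> valid_partition H \<C> It \<longrightarrow> k \<in> idx_set \<longrightarrow>
     (\<forall>i s. (\<Sum>\<^sub>\<infinity>F\<in>bdry_dir \<C> It k i s.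
                hausdorff_measure CARD('n) (face_set F - halfcyl H (h / H) k i s))
             \<le> ennreal (c * (h / H) * H ^ CARD('n))) \<and>
     (\<Sum>\<^sub>\<infinity>F\<in>bdry_block \<C> It k - (\<Union>j. bdry_dir \<C> It k j False \<union> bdry_dir \<C> It k j True).
         hausdorff_measure CARD('n) (face_set F))
       \<le> ennreal (c * (h / H) * H ^ CARD('n))"
proof -
  have "cube_block c1 c2 h \<C> H It k"
    if "0 < H" "0 < h" "h / H < 1/2" "is_grid c1 c2 h \<C>" "valid_partition H \<C> It" "k \<in> idx_set"
    for H h and \<C> :: "(real^('n option)) set set" and It k
    using assms that by unfold_locales (simp_all add: field_simps)
  then show ?thesis
    by (intro exI[of _ "face_bound_const CARD('n) c1 c2"] allI impI cube_block.face_sums_le) auto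
qed

end
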